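(* Let $k=2$, $0<\theta<1/3$ and $\lambda>\frac{9}{4(1-3\theta)}$. Then every family $(z_{1,i},z_{2,i})_{i\in\mathbb{T}^2}$ of positive numbers satisfying, for all $i$, $z_{1,i}=\lambda\prod_{j\in S(i)}F(z_{1,j},z_{2,j},\theta)$ and $z_{2,i}=\lambda\prod_{j\in S(i)}F(z_{2,j},z_{1,j},\theta)$ satisfies $x_1^*\le z_{j,i}\le x_2^*$ for $j=1,2$ and all $i\in\mathbb{T}^2$.
   Context: $\mathbb{T}^2$ is the rooted binary Cayley tree (each vertex has $2$ direct successors; $S(i)$ is the set of direct successors of $i$). $F(x,y,\theta)=\frac{1+x+\theta y}{1+x+y}$. Under the stated conditions, the system $x=\lambda F(x,y,\theta)^2$, $y=\lambda F(y,x,\theta)^2$ has exactly three positive solutions $(x^*,x^* )$, $(x_1^*,x_2^* )$, $(x_2^*,x_1^* )$, where $x_1^*<x_2^*$. *)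

theory Defs
  imports "HOL-Analysis.Analysis"
begin

(* Vertices of the rooted binary Cayley tree T^2: finite words over bool;
   the root is [] and the direct successors of i are True#i and False#i. *)
type_synonym vertex = "bool list"

definition succs :: "vertex \<Rightarrow> vertex set" where
  "succs i = {b # i | b. True}"

definition F :: "real \<Rightarrow> real \<Rightarrow> real \<Rightarrow> real" where
  "F x y \<theta> = (1 + x + \<theta> * y) / (1 + x + y)"

end

theory Submission
  imports Defs
begin

text \<open>
  Since 0 < F \<le> 1, every positive solution takes values in (0, \<lambda>].
  F is increasing in its first and decreasing in its second argument, so if all values
  of a solution lie in [L, U], they also lie in [\<lambda> F(L,U)^2, \<lambda> F(U,L)^2]. Iterating from
  U = \<lambda>, L = 0 gives a decreasing upper and an increasing lower bound, which converge to a
  solution (U*, L*) of the two-periodic system. The constant solution (x2*, x1*) is trapped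
  between the bounds too, so L* \<le> x1* < x2* \<le> U*. Finally the asymmetric solution is
  unique: for a = \<surd>U*, b = \<surd>L*, both a + b and ab are determined by \<lambda> and \<theta>.
\<close>

lemma F_pos:
  assumes "0 \<le> t" "0 \<le> x" "0 \<le> y"
  shows "0 < F x y t"
  unfolding F_def using assms by (simp add: add_pos_nonneg)

lemma F_le_one:
  assumes "t \<le> 1" "0 \<le> x" "0 \<le> y"
  shows "F x y t \<le> 1"
proof -
  have "t * y \<le> y" using mult_right_mono[OF assms(1,3)] by simp
  then show ?thesis unfolding F_def using assms by simp
qed

lemma F_mono:
  assumes "t \<le> 1" "0 \<le> x" "x \<le> x'" "0 \<le> y'" "y' \<le> y"
  shows "F x y t \<le> F x' y' t"
proof -
  have "(1+x'+t*y)*(1+x+y) - (1+x+t*y)*(1+x'+y) = (x'-x)*((1-t)*y)" by algebra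
  moreover have "0 \<le> (x'-x)*((1-t)*y)" using assms by simp
  ultimately have "(1+x+t*y)*(1+x'+y) \<le> (1+x'+t*y)*(1+x+y)" by linarith
  then have increasing: "F x y t \<le> F x' y t"
    unfolding F_def using assms by (simp add: divide_simps)
  have "(1+x'+t*y')*(1+x'+y) - (1+x'+t*y)*(1+x'+y') = (y-y')*((1-t)*(1+x'))" by algebra
  moreover have "0 \<le> (y-y')*((1-t)*(1+x'))" using assms by simp
  ultimately have "(1+x'+t*y)*(1+x'+y') \<le> (1+x'+t*y')*(1+x'+y)" by linarith
  then have "F x' y t \<le> F x' y' t"
    unfolding F_def using assms by (simp add: divide_simps)
  with increasing show ?thesis by linarith
qed

lemma succs_eq: "succs i = {True # i, False # i}"
  unfolding succs_def by (auto intro: bool.exhaust)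

lemma F_product_bounds:
  assumes "0 \<le> t" "t \<le> 1" "0 \<le> l"
    "l \<le> a1" "a1 \<le> u" "l \<le> b1" "b1 \<le> u" "l \<le> a2" "a2 \<le> u" "l \<le> b2" "b2 \<le> u"
  shows "(F l u t)^2 \<le> F a1 b1 t * F a2 b2 t" "F a1 b1 t * F a2 b2 t \<le> (F u l t)^2"
proof -
  have F: "F l u t \<le> F a1 b1 t" "F a1 b1 t \<le> F u l t"
    "F l u t \<le> F a2 b2 t" "F a2 b2 t \<le> F u l t"
    using assms by (auto intro!: F_mono)
  have "0 < F l u t" using assms by (intro F_pos) auto
  with F show "(F l u t)^2 \<le> F a1 b1 t * F a2 b2 t" "F a1 b1 t * F a2 b2 t \<le> (F u l t)^2"
    unfolding power2_eq_square by (auto intro!: mult_mono)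
qed

lemma F_square_scaled_range:
  assumes "0 \<le> t" "t \<le> 1" "0 \<le> lam" "0 \<le> x" "0 \<le> y"
  shows "0 \<le> lam * (F x y t)^2 \<and> lam * (F x y t)^2 \<le> lam"
proof -
  have "(F x y t)^2 \<le> 1"
    using F_pos[OF assms(1,4,5)] F_le_one[OF assms(2,4,5)] by (simp add: power_le_one)
  then show ?thesis using assms(3) by (simp add: mult_left_le)
qed

fun upper_seq :: "real \<Rightarrow> real \<Rightarrow> nat \<Rightarrow> real"
  and lower_seq :: "real \<Rightarrow> real \<Rightarrow> nat \<Rightarrow> real" where
  "upper_seq lam t 0 = lam"
| "upper_seq lam t (Suc n) = lam * (F (upper_seq lam t n) (lower_seq lam t n) t)^2"
| "lower_seq lam t 0 = 0"
| "lower_seq lam t (Suc n) = lam * (F (lower_seq lam t n) (upper_seq lam t n) t)^2"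

lemma bounds_in_range:
  assumes "0 \<le> t" "t \<le> 1" "0 \<le> lam"
  shows "0 \<le> upper_seq lam t n \<and> upper_seq lam t n \<le> lam \<and>
         0 \<le> lower_seq lam t n \<and> lower_seq lam t n \<le> lam"
  by (induction n) (use assms F_square_scaled_range[OF assms] in auto)

lemma tree_solution_between_bounds:
  fixes z1 z2 :: "vertex \<Rightarrow> real"
  assumes "0 \<le> t" "t \<le> 1" "0 < lam" "\<And>i. 0 < z1 i" "\<And>i. 0 < z2 i"
    and z1: "\<And>i. z1 i = lam * (\<Prod>j\<in>succs i. F (z1 j) (z2 j) t)"
    and z2: "\<And>i. z2 i = lam * (\<Prod>j\<in>succs i. F (z2 j) (z1 j) t)"
  shows "lower_seq lam t n \<le> z1 i \<and> z1 i \<le> upper_seq lam t n \<and>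
         lower_seq lam t n \<le> z2 i \<and> z2 i \<le> upper_seq lam t n"
proof (induction n arbitrary: i)
  case 0
  have "F a b t * F c d t \<le> 1" if "0 < a" "0 < b" "0 < c" "0 < d" for a b c d
    using that assms(1,2) F_le_one F_pos by (simp add: mult_le_one less_imp_le)
  then have "z1 i \<le> lam" "z2 i \<le> lam"
    unfolding z1[of i] z2[of i] using assms(3-5) by (simp_all add: succs_eq mult_left_le)
  with assms(4,5)[of i] show ?case by (simp add: less_imp_le)
next
  case (Suc n)
  have "0 \<le> lower_seq lam t n" using bounds_in_range[OF assms(1,2)] assms(3) by simp
  note bounds = F_product_bounds[OF assms(1,2) this]
  define p1 where "p1 = F (z1 (True#i)) (z2 (True#i)) t * F (z1 (False#i)) (z2 (False#i)) t"
  define p2 where "p2 = F (z2 (True#i)) (z1 (True#i)) t * F (z2 (False#i)) (z1 (False#i)) t"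
  have "z1 i = lam * p1" "z2 i = lam * p2"
    using z1[of i] z2[of i] by (simp_all add: succs_eq p1_def p2_def)
  moreover have "(F (lower_seq lam t n) (upper_seq lam t n) t)^2 \<le> p \<and>
      p \<le> (F (upper_seq lam t n) (lower_seq lam t n) t)^2" if "p \<in> {p1, p2}" for p
    using that Suc.IH[of "True#i"] Suc.IH[of "False#i"] unfolding p1_def p2_def
    by (auto simp: bounds)
  ultimately show ?case using \<open>0 < lam\<close> by (simp add: mult_left_mono)
qed

lemma bounds_monotone:
  assumes "0 \<le> t" "t \<le> 1" "0 \<le> lam"
  shows "upper_seq lam t (Suc n) \<le> upper_seq lam t n \<and>
         lower_seq lam t n \<le> lower_seq lam t (Suc n)"
proof (induction n)
  case 0
  show ?case using bounds_in_range[OF assms, of 1] by simp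
next
  case (Suc n)
  have range: "0 \<le> upper_seq lam t m" "0 \<le> lower_seq lam t m" for m
    using bounds_in_range[OF assms] by auto
  have "F (upper_seq lam t (Suc n)) (lower_seq lam t (Suc n)) t
          \<le> F (upper_seq lam t n) (lower_seq lam t n) t"
       "F (lower_seq lam t n) (upper_seq lam t n) t
          \<le> F (lower_seq lam t (Suc n)) (upper_seq lam t (Suc n)) t"
    using Suc range assms by (auto intro: F_mono)
  moreover have "0 \<le> F a b t" if "0 \<le> a" "0 \<le> b" for a b
    using F_pos[OF assms(1) that] by simp
  ultimately show ?case
    using range assms(3) by (simp add: mult_left_mono power_mono)
qed

lemma bounds_converge_to_fixed_point:
  assumes "0 \<le> t" "t \<le> 1" "0 \<le> lam"
  obtains U L where "upper_seq lam t \<longlonglongrightarrow> U" "lower_seq lam t \<longlonglongrightarrow> L"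
    "U = lam * (F U L t)^2" "L = lam * (F L U t)^2"
proof -
  have range: "0 \<le> upper_seq lam t n" "0 \<le> lower_seq lam t n" "lower_seq lam t n \<le> lam" for n
    using bounds_in_range[OF assms] by auto
  have "decseq (upper_seq lam t)" "incseq (lower_seq lam t)"
    using bounds_monotone[OF assms] by (auto intro: decseq_SucI incseq_SucI)
  then obtain U L where U: "upper_seq lam t \<longlonglongrightarrow> U" and L: "lower_seq lam t \<longlonglongrightarrow> L"
    using range by (metis decseq_convergent incseq_convergent)
  have "0 \<le> U" "0 \<le> L"
    using range by (auto intro: LIMSEQ_le_const[OF U] LIMSEQ_le_const[OF L])
  then have "1 + U + L \<noteq> 0" "1 + L + U \<noteq> 0" by linarith+
  then have "(\<lambda>n. upper_seq lam t (Suc n)) \<longlonglongrightarrow> lam * (F U L t)^2"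
            "(\<lambda>n. lower_seq lam t (Suc n)) \<longlonglongrightarrow> lam * (F L U t)^2"
    unfolding upper_seq.simps lower_seq.simps F_def using U L by (auto intro!: tendsto_intros)
  moreover have "(\<lambda>n. upper_seq lam t (Suc n)) \<longlonglongrightarrow> U"
    "(\<lambda>n. lower_seq lam t (Suc n)) \<longlonglongrightarrow> L"
    using LIMSEQ_Suc[OF U] LIMSEQ_Suc[OF L] .
  ultimately show ?thesis
    using U L LIMSEQ_unique that by blast
qed

text \<open>In the square roots a, b, c of x, y, \<lambda> the equations become polynomial.\<close>

lemma sqrt_fixed_point_equation:
  assumes "0 \<le> t" "0 \<le> x" "0 \<le> y" "0 \<le> lam" "x = lam * (F x y t)^2"
  shows "sqrt x * (1 + x + y) = sqrt lam * (1 + x + t * y)"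
proof -
  have "sqrt x = sqrt lam * F x y t"
    using F_pos[OF assms(1-3)] by (subst assms(5)) (simp add: real_sqrt_mult)
  moreover have "0 < 1 + x + y" using assms by linarith
  ultimately show ?thesis by (simp add: F_def)
qed

lemma asymmetric_sum_product:
  fixes a b c t :: real
  assumes "t < 1" "0 < b" "b < a" "0 < c"
    and e1: "a*(1+a^2+b^2) = c*(1+a^2+t*b^2)"
    and e2: "b*(1+a^2+b^2) = c*(1+b^2+t*a^2)"
  shows "(a+b)^2 - 1 = c*(1+t)*(a+b)" "a*b*(1+t) = 1 + t*(a+b)^2"
proof -
  have "(a-b)*(1+a^2+b^2) = c*(1-t)*(a-b)*(a+b)" using e1 e2 by algebra
  then have diff: "1+a^2+b^2 = c*(1-t)*(a+b)" using assms by simp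
  have "c*(1-t)*(a+b)^2 = (a+b)*(1+a^2+b^2)"
    by (subst diff) (simp add: power2_eq_square algebra_simps)
  also have "\<dots> = c*(2+(1+t)*(a^2+b^2))" using e1 e2 by algebra
  finally have "(1-t)*(a+b)^2 = 2+(1+t)*(a^2+b^2)" using assms by simp
  then show prod: "a*b*(1+t) = 1 + t*(a+b)^2" by algebra
  have "(1+t)*(1+a^2+b^2) = c*(1-t)*(1+t)*(a+b)" using diff by simp
  then have "(1-t)*((a+b)^2 - 1) = (1-t)*(c*(1+t)*(a+b))" using prod by algebra
  then show "(a+b)^2 - 1 = c*(1+t)*(a+b)" using assms by simp
qed

lemma asymmetric_root_solution_unique:
  fixes a b a' b' c t :: real
  assumes "0 < t" "t < 1" "0 < b" "b < a" "0 < b'" "b' < a'" "0 < c"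
    and "a*(1+a^2+b^2) = c*(1+a^2+t*b^2)" "b*(1+a^2+b^2) = c*(1+b^2+t*a^2)"
    and "a'*(1+a'^2+b'^2) = c*(1+a'^2+t*b'^2)" "b'*(1+a'^2+b'^2) = c*(1+b'^2+t*a'^2)"
  shows "a = a' \<and> b = b'"
proof -
  note P = asymmetric_sum_product[OF assms(2-4,7-9)]
   and P' = asymmetric_sum_product[OF assms(2,5-7,10,11)]
  define p p' where "p = a + b" and "p' = a' + b'"
  have p: "p^2 - 1 = c*(1+t)*p" "p'^2 - 1 = c*(1+t)*p'" using P(1) P'(1) p_def p'_def by auto
  have "0 < p" "0 < p'" using assms p_def p'_def by auto
  have "(p - p') * (p + p' - c*(1+t)) = 0" using p by algebra
  moreover have "p + p' \<noteq> c*(1+t)"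
  proof
    assume "p + p' = c*(1+t)"
    \<comment> \<open>the roots of the quadratic s^2 - c(1+t) s - 1 have product -1\<close>
    then have "p^2 - 1 = (p + p') * p" using p(1) by simp
    then have "p * p' = -1" by (simp add: power2_eq_square algebra_simps)
    then show False using \<open>0 < p\<close> \<open>0 < p'\<close> by (smt (verit) mult_pos_pos)
  qed
  ultimately have "p = p'" by simp
  then have "a*b*(1+t) = a'*b'*(1+t)" using P(2) P'(2) p_def p'_def by simp
  then have "a*b = a'*b'" using assms(1) by simp
  have "(a-b)^2 = p^2 - 4*(a*b)" "(a'-b')^2 = p'^2 - 4*(a'*b')"
    using p_def p'_def by (simp_all add: power2_eq_square algebra_simps)
  then have "(a-b)^2 = (a'-b')^2" using \<open>p = p'\<close> \<open>a*b = a'*b'\<close> by simp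
  then have "a - b = a' - b'" using assms by (smt (verit) power2_eq_iff)
  then show ?thesis using \<open>p = p'\<close> p_def p'_def by auto
qed

lemma asymmetric_fixed_point_unique:
  assumes "0 < t" "t < 1" "0 < lam" "0 < y" "y < x" "0 < y'" "y' < x'"
    and "x = lam * (F x y t)^2" "y = lam * (F y x t)^2"
    and "x' = lam * (F x' y' t)^2" "y' = lam * (F y' x' t)^2"
  shows "x = x' \<and> y = y'"
proof -
  have eq: "sqrt u * (1 + u + v) = sqrt lam * (1 + u + t * v)"
    if "0 < u" "0 < v" "u = lam * (F u v t)^2" for u v
    using sqrt_fixed_point_equation[of t u v lam] that assms(1,3) by simp
  have "sqrt x = sqrt x' \<and> sqrt y = sqrt y'"
    by (rule asymmetric_root_solution_unique[where c = "sqrt lam"])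
      (use assms eq[of x y] eq[of y x] eq[of x' y'] eq[of y' x'] in \<open>simp_all add: add_ac\<close>)
  then show ?thesis by simp
qed

theorem mainTheorem16:
  fixes \<theta> lam x1 x2 :: real and z1 z2 :: "vertex \<Rightarrow> real"
  assumes "0 < \<theta>" and "\<theta> < 1/3"
    and "lam > 9 / (4 * (1 - 3 * \<theta>))"
    and "0 < x1" and "x1 < x2"
    and "x1 = lam * (F x1 x2 \<theta>)^2" and "x2 = lam * (F x2 x1 \<theta>)^2"
    and "\<And>i. 0 < z1 i" and "\<And>i. 0 < z2 i"
    and "\<And>i. z1 i = lam * (\<Prod>j\<in>succs i. F (z1 j) (z2 j) \<theta>)"
    and "\<And>i. z2 i = lam * (\<Prod>j\<in>succs i. F (z2 j) (z1 j) \<theta>)"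
  shows "\<forall>i. x1 \<le> z1 i \<and> z1 i \<le> x2 \<and> x1 \<le> z2 i \<and> z2 i \<le> x2"
proof -
  have t: "0 \<le> \<theta>" "\<theta> \<le> 1" using assms(1,2) by simp_all
  have "0 < 9 / (4 * (1 - 3 * \<theta>))" using assms(2) by simp
  then have "0 < lam" using assms(3) by linarith
  obtain U L where U: "upper_seq lam \<theta> \<longlonglongrightarrow> U" and L: "lower_seq lam \<theta> \<longlonglongrightarrow> L"
    and fixed: "U = lam * (F U L \<theta>)^2" "L = lam * (F L U \<theta>)^2"
    using bounds_converge_to_fixed_point[OF t] \<open>0 < lam\<close> by (metis less_imp_le)
  note between = tree_solution_between_bounds[OF t \<open>0 < lam\<close>]
  have "lower_seq lam \<theta> n \<le> x1 \<and> x2 \<le> upper_seq lam \<theta> n" for n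
    using between[of "\<lambda>_. x2" "\<lambda>_. x1" n "[]"] assms(4-7)
    by (simp add: succs_eq power2_eq_square)
  then have "L \<le> x1" "x2 \<le> U" by (auto intro: LIMSEQ_le_const[OF U] LIMSEQ_le_const2[OF L])
  have "0 \<le> L" using bounds_in_range[OF t] \<open>0 < lam\<close> by (auto intro: LIMSEQ_le_const[OF L])
  then have "0 < lam * (F L U \<theta>)^2"
    using F_pos[OF t(1), of L U] \<open>0 < lam\<close> \<open>x2 \<le> U\<close> assms(4,5) by simp
  then have "0 < L" using fixed(2) by linarith
  have "L \<le> z1 i \<and> z1 i \<le> U \<and> L \<le> z2 i \<and> z2 i \<le> U" for i
    using between[OF assms(8-11)] by (auto intro: LIMSEQ_le_const2[OF L] LIMSEQ_le_const[OF U])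
  moreover have "U = x2 \<and> L = x1"
    by (rule asymmetric_fixed_point_unique
        [OF assms(1) _ \<open>0 < lam\<close> \<open>0 < L\<close> _ _ _ fixed assms(7,6)])
      (use \<open>L \<le> x1\<close> \<open>x2 \<le> U\<close> assms(2,4,5) in linarith)+
  ultimately show ?thesis by simp
qed

end
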